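(* Let $\Gamma$ be a negative-definite plumbing forest, $v$ a vertex with framing $-p<0$, and assume $\Gamma_{+1}$ is negative-definite. Then the sequence \[\mathbb{H}(\Gamma-v)\xrightarrow{\ \mathbb{A}\ }\mathbb{H}(\Gamma)\xrightarrow{\ \mathbb{B}\ }\mathbb{H}(\Gamma_{+1})\longrightarrow 0\] is exact.
   Context: A plumbing forest is a finite forest with integer vertex framings $m(v)$; its lattice is $\mathbb{Z}^{\text{vertices}}$ with pairing $(v,v)=m(v)$, $(v,w)=-1$ if $v,w$ adjacent, $0$ otherwise; negative-definite means this form is. $\mathrm{Char}(\Gamma)$: homomorphisms $k$ from the lattice to $\mathbb{Z}$ with $\langle k,x\rangle\equiv(x,x)\bmod 2$ for all $x$; $v^*=(v,-)$, $v^2=(v,v)$. Lattice homology $\mathbb{H}(\Gamma)$: the complex vector space with basis $\{1\otimes k:k\in\mathrm{Char}(\Gamma)\}$ modulo the relations (I) $1\otimes k\sim0$ if $|\langle k,u\rangle|>-u^2$ for some vertex $u$; (II) $1\otimes k\sim(-1)^{u^2}\otimes(k\mp2u^* )$ if $\langle k,u\rangle=\pm u^2$ for some vertex $u$. $\Gamma-v$ is $\Gamma$ with $v$ deleted; $\Gamma_{+1}$ is $\Gamma$ with the framing of $v$ changed to $-p+1$. For $k\in\mathrm{Char}(\Gamma-v)$ and $i\equiv p\bmod 2$, $k'_i\in\mathrm{Char}(\Gamma)$ agrees with $k$ on $w\ne v$ and takes value $i$ on $v$; $\mathbb{A}(k)=\sum_{i\equiv p\bmod 2,\ |i|\le p}1\otimes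 k'_i$ (the terms with $|i|>p$ vanish in $\mathbb{H}(\Gamma)$). For $k\in\mathrm{Char}(\Gamma)$, $k^{\pm}\in\mathrm{Char}(\Gamma_{+1})$ agree with $k$ on $w\ne v$ and $\langle k^\pm,v\rangle=\langle k,v\rangle\pm1$; $\mathbb{B}(k)=(-1/2)\otimes k^++(1/2)\otimes k^-$. These induce well-defined linear maps on lattice homology. *)

theory Defs
  imports Complex_Main
begin

text \<open>A plumbing graph is given by a vertex set V, an adjacency relation E and
integer framings m.  Lattice elements and homomorphisms lattice -> Z are
represented by their values on the vertices (functions 'a => int).\<close>

definition is_cycle :: "('a \<Rightarrow> 'a \<Rightarrow> bool) \<Rightarrow> 'a list \<Rightarrow> bool" where
  "is_cycle E cs \<longleftrightarrow> length cs \<ge> 3 \<and> distinct cs \<and>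
     (\<forall>i. Suc i < length cs \<longrightarrow> E (cs ! i) (cs ! Suc i)) \<and> E (last cs) (hd cs)"

definition plumbing_forest :: "'a set \<Rightarrow> ('a \<Rightarrow> 'a \<Rightarrow> bool) \<Rightarrow> ('a \<Rightarrow> int) \<Rightarrow> bool" where
  "plumbing_forest V E m \<longleftrightarrow> finite V \<and>
     (\<forall>u w. E u w \<longrightarrow> u \<in> V \<and> w \<in> V) \<and>
     (\<forall>u w. E u w \<longrightarrow> E w u) \<and> (\<forall>u. \<not> E u u) \<and>
     (\<forall>cs. \<not> is_cycle E cs)"

definition Qf :: "('a \<Rightarrow> 'a \<Rightarrow> bool) \<Rightarrow> ('a \<Rightarrow> int) \<Rightarrow> 'a \<Rightarrow> 'a \<Rightarrow> int" where
  "Qf E m u w = (if u = w then m u else if E u w then -1 else 0)"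

definition pairing :: "'a set \<Rightarrow> ('a \<Rightarrow> 'a \<Rightarrow> bool) \<Rightarrow> ('a \<Rightarrow> int) \<Rightarrow> ('a \<Rightarrow> int) \<Rightarrow> ('a \<Rightarrow> int) \<Rightarrow> int" where
  "pairing V E m x y = (\<Sum>u\<in>V. \<Sum>w\<in>V. x u * y w * Qf E m u w)"

definition neg_definite :: "'a set \<Rightarrow> ('a \<Rightarrow> 'a \<Rightarrow> bool) \<Rightarrow> ('a \<Rightarrow> int) \<Rightarrow> bool" where
  "neg_definite V E m \<longleftrightarrow> (\<forall>x. (\<exists>u\<in>V. x u \<noteq> 0) \<longrightarrow> pairing V E m x x < 0)"

definition evalk :: "'a set \<Rightarrow> ('a \<Rightarrow> int) \<Rightarrow> ('a \<Rightarrow> int) \<Rightarrow> int" where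
  "evalk V k x = (\<Sum>u\<in>V. k u * x u)"

definition Char :: "'a set \<Rightarrow> ('a \<Rightarrow> 'a \<Rightarrow> bool) \<Rightarrow> ('a \<Rightarrow> int) \<Rightarrow> ('a \<Rightarrow> int) set" where
  "Char V E m = {k. (\<forall>u. u \<notin> V \<longrightarrow> k u = 0) \<and>
                    (\<forall>x. even (evalk V k x - pairing V E m x x))}"

definition dual :: "'a set \<Rightarrow> ('a \<Rightarrow> 'a \<Rightarrow> bool) \<Rightarrow> ('a \<Rightarrow> int) \<Rightarrow> 'a \<Rightarrow> ('a \<Rightarrow> int)" where
  "dual V E m u = (\<lambda>w. if w \<in> V then Qf E m u w else 0)"

definition delta :: "'b \<Rightarrow> ('b \<Rightarrow> complex)" where
  "delta k = (\<lambda>j. if j = k then 1 else 0)"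

definition free_space :: "'a set \<Rightarrow> ('a \<Rightarrow> 'a \<Rightarrow> bool) \<Rightarrow> ('a \<Rightarrow> int) \<Rightarrow> (('a \<Rightarrow> int) \<Rightarrow> complex) set" where
  "free_space V E m = {f. finite {k. f k \<noteq> 0} \<and> {k. f k \<noteq> 0} \<subseteq> Char V E m}"

definition cspan :: "('b \<Rightarrow> complex) set \<Rightarrow> ('b \<Rightarrow> complex) set" where
  "cspan S = {f. \<exists>G c. finite G \<and> G \<subseteq> S \<and> f = (\<lambda>j. \<Sum>g\<in>G. c g * g j)}"

text \<open>Generators of the relations (I) and (II) defining lattice homology.\<close>
definition relgens :: "'a set \<Rightarrow> ('a \<Rightarrow> 'a \<Rightarrow> bool) \<Rightarrow> ('a \<Rightarrow> int) \<Rightarrow> (('a \<Rightarrow> int) \<Rightarrow> complex) set" where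
  "relgens V E m =
     {delta k | k. k \<in> Char V E m \<and> (\<exists>u\<in>V. \<bar>k u\<bar> > - m u)}
   \<union> {(\<lambda>j. delta k j - (-1::complex) ^ nat \<bar>m u\<bar> * delta (\<lambda>w. k w - 2 * dual V E m u w) j)
       | k u. k \<in> Char V E m \<and> u \<in> V \<and> k u = m u}
   \<union> {(\<lambda>j. delta k j - (-1::complex) ^ nat \<bar>m u\<bar> * delta (\<lambda>w. k w + 2 * dual V E m u w) j)
       | k u. k \<in> Char V E m \<and> u \<in> V \<and> k u = - m u}"

text \<open>Lattice homology H(Gamma) = free_space / rel_space.\<close>
definition rel_space :: "'a set \<Rightarrow> ('a \<Rightarrow> 'a \<Rightarrow> bool) \<Rightarrow> ('a \<Rightarrow> int) \<Rightarrow> (('a \<Rightarrow> int) \<Rightarrow> complex) set" where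
  "rel_space V E m = cspan (relgens V E m)"

definition linext :: "('b \<Rightarrow> ('c \<Rightarrow> complex)) \<Rightarrow> ('b \<Rightarrow> complex) \<Rightarrow> ('c \<Rightarrow> complex)" where
  "linext gen f = (\<lambda>j. \<Sum>k\<in>{k. f k \<noteq> 0}. f k * gen k j)"

definition Agen :: "'a \<Rightarrow> int \<Rightarrow> ('a \<Rightarrow> int) \<Rightarrow> (('a \<Rightarrow> int) \<Rightarrow> complex)" where
  "Agen v p k = (\<lambda>j. \<Sum>i\<in>{i. \<bar>i\<bar> \<le> p \<and> even (i - p)}. delta (k(v := i)) j)"

definition Bgen :: "'a \<Rightarrow> ('a \<Rightarrow> int) \<Rightarrow> (('a \<Rightarrow> int) \<Rightarrow> complex)" where
  "Bgen v k = (\<lambda>j. (-1/2) * delta (k(v := k v + 1)) j + (1/2) * delta (k(v := k v - 1)) j)"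

end

theory Submission
  imports Defs "HOL-Library.Function_Algebras"
begin

(*
  B has a homotopy inverse C, defined on generators by
    C (1 \<otimes> k) = -2 \<Sum> 1 \<otimes> k(v := i),  summed over i \<equiv> p mod 2 with -p \<le> i < \<langle>k,v\<rangle>.
  Since B (1 \<otimes> k) = (1 \<otimes> k(v := \<langle>k,v\<rangle> - 1) - 1 \<otimes> k(v := \<langle>k,v\<rangle> + 1)) / 2, the sum telescopes:
  B C (1 \<otimes> k) = 1 \<otimes> k - 1 \<otimes> k(v := -p - 1), and the last term is killed by relation (I) at v.
  Similarly C B (1 \<otimes> k) - 1 \<otimes> k is 0 or killed by (I) at v.  C maps the relations of \<Gamma>\<^sub>+\<^sub>1
  into the span W of the relations of \<Gamma> and the image of A (A (1 \<otimes> k) is the same sum over the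
  full range -p \<le> i \<le> p), and B maps W into the relations of \<Gamma>\<^sub>+\<^sub>1.  Hence ker B = W, which is
  exactness at H(\<Gamma>), and B is onto.
*)

section \<open>Spans and linear extensions\<close>

lemma sum_fun_apply: "(\<Sum>a\<in>A. F a) x = (\<Sum>a\<in>A. F a x)"
  by (induction A rule: infinite_finite_induct) auto

interpretation cvs: module "\<lambda>(c::complex) (f::'b \<Rightarrow> complex) j. c * f j"
  by unfold_locales (auto simp: fun_eq_iff algebra_simps)

lemma cspan_eq_span: "cspan S = cvs.span S"
  unfolding cspan_def cvs.span_explicit by (auto simp: sum_fun_apply fun_eq_iff)

lemma cspan_zero: "(\<lambda>j. 0) \<in> cspan S"
  using cvs.span_zero by (simp add: cspan_eq_span zero_fun_def)

lemma cspan_superset: "g \<in> S \<Longrightarrow> g \<in> cspan S"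
  by (simp add: cspan_eq_span cvs.span_base)

lemma cspan_add: "f \<in> cspan S \<Longrightarrow> h \<in> cspan S \<Longrightarrow> (\<lambda>j. f j + h j) \<in> cspan S"
  using cvs.span_add[of f S h] by (simp add: cspan_eq_span plus_fun_def)

lemma cspan_scale: "f \<in> cspan S \<Longrightarrow> (\<lambda>j. a * f j) \<in> cspan S"
  by (simp add: cspan_eq_span cvs.span_scale)

lemma cspan_diff: "f \<in> cspan S \<Longrightarrow> h \<in> cspan S \<Longrightarrow> (\<lambda>j. f j - h j) \<in> cspan S"
  using cvs.span_diff[of f S h] by (simp add: cspan_eq_span fun_diff_def)

lemma cspan_sum: "(\<And>i. i \<in> I \<Longrightarrow> f i \<in> cspan S) \<Longrightarrow> (\<lambda>j. \<Sum>i\<in>I. f i j) \<in> cspan S"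
  using cvs.span_sum[of I f S] by (simp add: cspan_eq_span sum_fun_apply[abs_def])

lemma cspan_mono: "S \<subseteq> T \<Longrightarrow> cspan S \<subseteq> cspan T"
  by (simp add: cspan_eq_span cvs.span_mono)

lemma cspan_subset_cspan: "S \<subseteq> cspan T \<Longrightarrow> cspan S \<subseteq> cspan T"
  by (simp add: cspan_eq_span cvs.span_minimal)

lemma cspan_induct [consumes 1, case_names zero step]:
  assumes "f \<in> cspan S" "P (\<lambda>j. 0)" "\<And>c g h. g \<in> S \<Longrightarrow> P h \<Longrightarrow> P (\<lambda>j. c * g j + h j)"
  shows "P f"
  using assms(1)[unfolded cspan_eq_span]
proof (induction rule: cvs.span_induct_alt)
  case base
  then show ?case using assms(2) by (simp add: zero_fun_def)
next
  case (step c g h)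
  then show ?case using assms(3) by (simp add: plus_fun_def)
qed

definition supp :: "('b \<Rightarrow> complex) \<Rightarrow> 'b set" where
  "supp f = {k. f k \<noteq> 0}"

lemma free_space_iff: "f \<in> free_space V E m \<longleftrightarrow> finite (supp f) \<and> supp f \<subseteq> Char V E m"
  by (simp add: free_space_def supp_def)

lemma supp_delta [simp]: "supp (delta k) = {k}"
  by (auto simp: supp_def delta_def)

lemma supp_sum_subset: "supp (\<lambda>j. \<Sum>i\<in>I. f i j) \<subseteq> (\<Union>i\<in>I. supp (f i))"
proof
  fix k assume "k \<in> supp (\<lambda>j. \<Sum>i\<in>I. f i j)"
  then obtain i where "i \<in> I" "f i k \<noteq> 0"
    unfolding supp_def by (meson mem_Collect_eq sum.not_neutral_contains_not_neutral)
  then show "k \<in> (\<Union>i\<in>I. supp (f i))" by (auto simp: supp_def)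
qed

lemma finite_supp_lincomb2: "finite (supp (\<lambda>j. a * delta x j + b * delta y j))"
  by (rule finite_subset[of _ "{x, y}"]) (auto simp: supp_def delta_def)

lemma finite_supp_diff2: "finite (supp (\<lambda>j. delta x j - b * delta y j))"
  by (rule finite_subset[of _ "{x, y}"]) (auto simp: supp_def delta_def)

lemma delta_expansion:
  assumes "finite (supp f)"
  shows "f = (\<lambda>j. \<Sum>k\<in>supp f. f k * delta k j)"
proof
  fix j
  have "(\<Sum>k\<in>supp f. f k * delta k j) = (\<Sum>k\<in>supp f. if k = j then f j else 0)"
    by (intro sum.cong) (auto simp: delta_def)
  also have "\<dots> = f j" using assms by (simp add: sum.delta' supp_def)
  finally show "f j = (\<Sum>k\<in>supp f. f k * delta k j)" by simp
qed

lemma linext_eq_sum: "finite S \<Longrightarrow> supp f \<subseteq> S \<Longrightarrow> linext gen f j = (\<Sum>k\<in>S. f k * gen k j)"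
  unfolding linext_def by (intro sum.mono_neutral_left) (auto simp: supp_def)

lemma linext_supp: "linext gen f = (\<lambda>j. \<Sum>k\<in>supp f. f k * gen k j)"
  by (simp add: linext_def supp_def)

lemma linext_delta [simp]: "linext gen (delta k) = gen k"
  by (simp add: linext_supp) (simp add: delta_def)

lemma linext_lincomb2:
  "linext gen (\<lambda>j. a * delta x j + b * delta y j) = (\<lambda>z. a * gen x z + b * gen y z)"
proof
  fix z
  have "supp (\<lambda>j. a * delta x j + b * delta y j) \<subseteq> {x, y}" by (auto simp: supp_def delta_def)
  then show "linext gen (\<lambda>j. a * delta x j + b * delta y j) z = a * gen x z + b * gen y z"
    by (subst linext_eq_sum[of "{x, y}"]) (auto simp: delta_def distrib_right sum.insert_if)
qed

lemma linext_diff2: "linext gen (\<lambda>j. delta x j - b * delta y j) = (\<lambda>z. gen x z - b * gen y z)"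
  using linext_lincomb2[of gen 1 x "-b" y] by simp

lemma linext_add:
  assumes "finite (supp f)" "finite (supp h)"
  shows "linext gen (\<lambda>k. f k + h k) j = linext gen f j + linext gen h j"
proof -
  have "supp (\<lambda>k. f k + h k) \<subseteq> supp f \<union> supp h" by (auto simp: supp_def)
  then show ?thesis
    using assms by (simp add: linext_eq_sum[of "supp f \<union> supp h"] distrib_right sum.distrib)
qed

lemma linext_scale:
  assumes "finite (supp f)"
  shows "linext gen (\<lambda>k. a * f k) j = a * linext gen f j"
proof -
  have "supp (\<lambda>k. a * f k) \<subseteq> supp f" by (auto simp: supp_def)
  then show ?thesis
    using assms by (simp add: linext_eq_sum[of "supp f"] sum_distrib_left mult.assoc)
qed

lemma linext_sum:
  assumes "finite I" "\<And>i. i \<in> I \<Longrightarrow> finite (supp (h i))"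
  shows "linext gen (\<lambda>k. \<Sum>i\<in>I. c i * h i k) = (\<lambda>j. \<Sum>i\<in>I. c i * linext gen (h i) j)"
proof
  fix j
  define S where "S = (\<Union>i\<in>I. supp (h i))"
  have S: "finite S" using assms by (simp add: S_def)
  have "supp (\<lambda>k. \<Sum>i\<in>I. c i * h i k) \<subseteq> S"
    using supp_sum_subset[of "\<lambda>i k. c i * h i k" I] by (auto simp: S_def supp_def)
  then have "linext gen (\<lambda>k. \<Sum>i\<in>I. c i * h i k) j = (\<Sum>k\<in>S. (\<Sum>i\<in>I. c i * h i k) * gen k j)"
    by (rule linext_eq_sum[OF S])
  also have "\<dots> = (\<Sum>i\<in>I. c i * (\<Sum>k\<in>S. h i k * gen k j))"
    by (simp add: sum_distrib_right sum_distrib_left mult.assoc sum.swap[of _ S])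
  also have "\<dots> = (\<Sum>i\<in>I. c i * linext gen (h i) j)"
    using S by (intro sum.cong refl, subst linext_eq_sum[of S]) (auto simp: S_def)
  finally show "linext gen (\<lambda>k. \<Sum>i\<in>I. c i * h i k) j = (\<Sum>i\<in>I. c i * linext gen (h i) j)" .
qed

lemma linext_cspan:
  assumes "\<And>g. g \<in> S \<Longrightarrow> finite (supp g)" "\<And>g. g \<in> S \<Longrightarrow> linext gen g \<in> cspan T"
    and "f \<in> cspan S"
  shows "linext gen f \<in> cspan T"
proof -
  obtain G c where G: "finite G" "G \<subseteq> S" and f: "f = (\<lambda>j. \<Sum>g\<in>G. c g * g j)"
    using assms(3) unfolding cspan_def by blast
  have "linext gen f = (\<lambda>j. \<Sum>g\<in>G. c g * linext gen g j)"
    unfolding f using G assms(1) by (intro linext_sum) auto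
  also have "\<dots> \<in> cspan T"
    using G assms(2) by (intro cspan_sum cspan_scale) auto
  finally show ?thesis .
qed

lemma linext_zero [simp]: "linext gen (\<lambda>_. 0) = (\<lambda>_. 0)"
  by (simp add: linext_def)

lemma supp_linext:
  assumes "finite (supp h)" "\<And>k. k \<in> supp h \<Longrightarrow> finite (supp (C k)) \<and> supp (C k) \<subseteq> X"
  shows "finite (supp (linext C h)) \<and> supp (linext C h) \<subseteq> X"
proof -
  have "supp (linext C h) \<subseteq> (\<Union>k\<in>supp h. supp (\<lambda>j. h k * C k j))"
    unfolding linext_supp by (rule supp_sum_subset)
  also have "\<dots> \<subseteq> (\<Union>k\<in>supp h. supp (C k))"
    by (auto simp: supp_def)
  finally show ?thesis
    using assms by (auto intro: finite_subset)
qed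

lemma cspan_Un_image_decomp:
  assumes "f \<in> cspan (R \<union> gen ` K)"
  shows "\<exists>g. finite (supp g) \<and> supp g \<subseteq> K \<and> (\<exists>r\<in>cspan R. f = (\<lambda>j. linext gen g j + r j))"
  using assms
proof (induction rule: cspan_induct)
  case zero
  show ?case
    using cspan_zero by (intro exI[of _ "\<lambda>_. 0"] conjI bexI[of _ "\<lambda>_. 0"]) (auto simp: supp_def)
next
  case (step c x h)
  then obtain g r where g: "finite (supp g)" "supp g \<subseteq> K" and r: "r \<in> cspan R"
    and h: "h = (\<lambda>j. linext gen g j + r j)"
    by blast
  from step.hyps(1) show ?case
  proof
    assume "x \<in> R"
    then have "(\<lambda>j. c * x j + r j) \<in> cspan R"
      using r by (intro cspan_add cspan_scale cspan_superset[of x])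
    then show ?thesis
      using g unfolding h by (intro exI[of _ g] conjI bexI[of _ "\<lambda>j. c * x j + r j"]) auto
  next
    assume "x \<in> gen ` K"
    then obtain k where k: "k \<in> K" "x = gen k" by blast
    define g' where "g' = (\<lambda>k'. c * delta k k' + g k')"
    have "supp g' \<subseteq> insert k (supp g)"
      by (auto simp: supp_def g'_def delta_def)
    then have "finite (supp g') \<and> supp g' \<subseteq> K"
      using g k by (auto intro: finite_subset)
    moreover have "finite (supp (\<lambda>k'. c * delta k k'))"
      by (rule finite_subset[of _ "{k}"]) (auto simp: supp_def delta_def)
    then have "(\<lambda>j. c * x j + h j) = (\<lambda>j. linext gen g' j + r j)"
      unfolding g'_def h k(2) by (simp add: linext_add[OF _ g(1)] linext_scale add.assoc)
    ultimately show ?thesis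
      using r by blast
  qed
qed

lemma cspan_Un_image_iff:
  "f \<in> cspan (R \<union> gen ` K) \<longleftrightarrow>
   (\<exists>g. finite (supp g) \<and> supp g \<subseteq> K \<and> (\<exists>r\<in>cspan R. f = (\<lambda>j. linext gen g j + r j)))"
proof
  assume "\<exists>g. finite (supp g) \<and> supp g \<subseteq> K \<and> (\<exists>r\<in>cspan R. f = (\<lambda>j. linext gen g j + r j))"
  then obtain g r where g: "finite (supp g)" "supp g \<subseteq> K" and r: "r \<in> cspan R"
    and f: "f = (\<lambda>j. linext gen g j + r j)"
    by blast
  have "linext gen g \<in> cspan (R \<union> gen ` K)"
    unfolding linext_supp using g by (intro cspan_sum cspan_scale cspan_superset) auto
  moreover have "r \<in> cspan (R \<union> gen ` K)"
    using r cspan_mono[of R "R \<union> gen ` K"] by blast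
  ultimately show "f \<in> cspan (R \<union> gen ` K)"
    unfolding f by (rule cspan_add)
qed (rule cspan_Un_image_decomp)

lemma linext_homotopy_kernel:
  assumes f: "finite (supp f)" "supp f \<subseteq> K" and Bf: "linext B f \<in> cspan R"
    and fin_B: "\<And>k. finite (supp (B k))" and fin_R: "\<And>r. r \<in> R \<Longrightarrow> finite (supp r)"
    and CR: "\<And>r. r \<in> R \<Longrightarrow> linext C r \<in> cspan W"
    and CB: "\<And>k. k \<in> K \<Longrightarrow> (\<lambda>x. delta k x - linext C (B k) x) \<in> cspan W"
  shows "f \<in> cspan W"
proof -
  have CBf: "linext C (linext B f) = (\<lambda>z. \<Sum>k\<in>supp f. f k * linext C (B k) z)"
    unfolding linext_supp[of B] by (rule linext_sum[OF f(1) fin_B])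
  have "f = (\<lambda>z. linext C (linext B f) z + (\<Sum>k\<in>supp f. f k * (delta k z - linext C (B k) z)))"
    by (subst delta_expansion[OF f(1)]) (simp add: CBf algebra_simps sum_subtractf)
  also have "\<dots> \<in> cspan W"
  proof (rule cspan_add)
    show "linext C (linext B f) \<in> cspan W"
      using fin_R CR Bf by (rule linext_cspan)
    show "(\<lambda>z. \<Sum>k\<in>supp f. f k * (delta k z - linext C (B k) z)) \<in> cspan W"
      using f CB by (intro cspan_sum cspan_scale) auto
  qed
  finally show ?thesis .
qed

lemma linext_homotopy_surjective:
  assumes h: "finite (supp h)" "supp h \<subseteq> K" and fin_C: "\<And>j. finite (supp (C j))"
    and BC: "\<And>j. j \<in> K \<Longrightarrow> (\<lambda>x. delta j x - linext B (C j) x) \<in> cspan R"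
  shows "(\<lambda>x. h x - linext B (linext C h) x) \<in> cspan R"
proof -
  have BCh: "linext B (linext C h) = (\<lambda>z. \<Sum>j\<in>supp h. h j * linext B (C j) z)"
    unfolding linext_supp[of C] by (rule linext_sum[OF h(1) fin_C])
  have "(\<lambda>x. h x - linext B (linext C h) x) = (\<lambda>z. \<Sum>j\<in>supp h. h j * (delta j z - linext B (C j) z))"
    by (subst (1) delta_expansion[OF h(1)]) (simp add: BCh algebra_simps sum_subtractf)
  also have "\<dots> \<in> cspan R"
    using h BC by (intro cspan_sum cspan_scale) auto
  finally show ?thesis .
qed

section \<open>Characteristic vectors\<close>

lemma even_double_sum_minus_diagonal:
  fixes F :: "'a \<Rightarrow> 'a \<Rightarrow> int"
  assumes "finite V" "\<And>u w. F u w = F w u"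
  shows "even ((\<Sum>u\<in>V. \<Sum>w\<in>V. F u w) - (\<Sum>u\<in>V. F u u))"
  using assms(1)
proof (induction V rule: finite_induct)
  case empty then show ?case by simp
next
  case (insert a V)
  have "(\<Sum>u\<in>insert a V. \<Sum>w\<in>insert a V. F u w)
      = F a a + (\<Sum>w\<in>V. F a w) + (\<Sum>u\<in>V. F u a) + (\<Sum>u\<in>V. \<Sum>w\<in>V. F u w)"
    using insert by (simp add: sum.distrib)
  also have "(\<Sum>u\<in>V. F u a) = (\<Sum>w\<in>V. F a w)" using assms(2) by simp
  finally have "(\<Sum>u\<in>insert a V. \<Sum>w\<in>insert a V. F u w) - (\<Sum>u\<in>insert a V. F u u)
     = 2 * (\<Sum>w\<in>V. F a w) + ((\<Sum>u\<in>V. \<Sum>w\<in>V. F u w) - (\<Sum>u\<in>V. F u u))"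
    using insert by simp
  then show ?case using insert.IH by simp
qed

text \<open>Modulo 2 the form is diagonal and \<open>x\<^sup>2 \<equiv> x\<close>, so \<open>(x,x) \<equiv> \<Sum>\<^sub>u m(u) x(u)\<close>.\<close>

lemma pairing_self_even:
  assumes "finite V" "\<And>u w. E u w \<Longrightarrow> E w u"
  shows "even (pairing V E m x x - (\<Sum>u\<in>V. m u * x u))"
proof -
  have "even (pairing V E m x x - (\<Sum>u\<in>V. x u * x u * m u))"
    unfolding pairing_def
    using even_double_sum_minus_diagonal[OF assms(1), of "\<lambda>u w. x u * x w * Qf E m u w"] assms(2)
    by (auto simp: Qf_def mult.commute)
  moreover have "even ((\<Sum>u\<in>V. x u * x u * m u) - (\<Sum>u\<in>V. m u * x u))"
    unfolding sum_subtractf[symmetric] by (intro dvd_sum) (auto simp: algebra_simps)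
  ultimately show ?thesis
    using dvd_add by fastforce
qed

lemma Char_iff:
  assumes "finite V" "\<And>u w. E u w \<Longrightarrow> E w u"
  shows "k \<in> Char V E m \<longleftrightarrow> (\<forall>u. u \<notin> V \<longrightarrow> k u = 0) \<and> (\<forall>u\<in>V. even (k u - m u))"
proof -
  have diff: "evalk V k x - pairing V E m x x
      = (\<Sum>u\<in>V. (k u - m u) * x u) - (pairing V E m x x - (\<Sum>u\<in>V. m u * x u))" for x
    by (simp add: evalk_def algebra_simps sum_subtractf)
  have "(\<forall>x. even (evalk V k x - pairing V E m x x)) \<longleftrightarrow> (\<forall>x. even (\<Sum>u\<in>V. (k u - m u) * x u))"
    unfolding diff using pairing_self_even[OF assms] by (simp add: even_diff)
  also have "\<dots> \<longleftrightarrow> (\<forall>u\<in>V. even (k u - m u))"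
  proof safe
    fix u assume "\<forall>x. even (\<Sum>u\<in>V. (k u - m u) * x u)" "u \<in> V"
    then show "even (k u - m u)"
      using assms(1) by (auto dest: spec[of _ "\<lambda>w. if w = u then 1 else 0"] simp: if_distrib sum.delta cong: if_cong)
  qed (auto intro: dvd_sum)
  finally show ?thesis unfolding Char_def by blast
qed

lemma Char_add_double:
  assumes "k \<in> Char V E m" "\<And>w. w \<notin> V \<Longrightarrow> x w = 0"
  shows "(\<lambda>w. k w + 2 * x w) \<in> Char V E m"
proof -
  have "evalk V (\<lambda>w. k w + 2 * x w) y - pairing V E m y y
      = (evalk V k y - pairing V E m y y) + 2 * evalk V x y" for y
    by (simp add: evalk_def algebra_simps sum.distrib sum_distrib_left)
  then show ?thesis using assms unfolding Char_def by auto
qed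

lemma Char_add_dual: "k \<in> Char V E m \<Longrightarrow> (\<lambda>w. k w + 2 * dual V E m' u w) \<in> Char V E m"
  by (rule Char_add_double) (simp_all add: dual_def)

lemma Char_diff_dual: "k \<in> Char V E m \<Longrightarrow> (\<lambda>w. k w - 2 * dual V E m' u w) \<in> Char V E m"
  using Char_add_double[of k V E m "\<lambda>w. - dual V E m' u w"] by (simp add: dual_def)

lemma dual_self: "u \<in> V \<Longrightarrow> dual V E m u u = m u"
  by (simp add: dual_def Qf_def)

lemma dual_upd_other: "u \<noteq> v \<Longrightarrow> dual V E (m(v := a)) u = dual V E m u"
  by (auto simp: dual_def Qf_def)

lemma dual_upd_at: "w \<noteq> v \<Longrightarrow> dual V E (m(v := a)) v w = dual V E m v w"
  by (auto simp: dual_def Qf_def)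

lemma dual_at_other: "u \<noteq> v \<Longrightarrow> v \<in> V \<Longrightarrow> dual V E m u v = (if E u v then -1 else 0)"
  by (auto simp: dual_def Qf_def)

lemma delta_in_rel_space:
  "k \<in> Char V E m \<Longrightarrow> u \<in> V \<Longrightarrow> - m u < \<bar>k u\<bar> \<Longrightarrow> delta k \<in> rel_space V E m"
  unfolding rel_space_def relgens_def by (rule cspan_superset) blast

lemma relII_in_rel_space:
  "k \<in> Char V E m \<Longrightarrow> u \<in> V \<Longrightarrow> k u = m u \<Longrightarrow>
   (\<lambda>j. delta k j - (-1::complex) ^ nat \<bar>m u\<bar> * delta (\<lambda>w. k w - 2 * dual V E m u w) j) \<in> rel_space V E m"
  unfolding rel_space_def relgens_def by (rule cspan_superset) blast

definition relgens_pos :: "'a set \<Rightarrow> ('a \<Rightarrow> 'a \<Rightarrow> bool) \<Rightarrow> ('a \<Rightarrow> int) \<Rightarrow> (('a \<Rightarrow> int) \<Rightarrow> complex) set" where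
  "relgens_pos V E m =
     {delta k | k. k \<in> Char V E m \<and> (\<exists>u\<in>V. \<bar>k u\<bar> > - m u)}
   \<union> {(\<lambda>j. delta k j - (-1::complex) ^ nat \<bar>m u\<bar> * delta (\<lambda>w. k w - 2 * dual V E m u w) j)
       | k u. k \<in> Char V E m \<and> u \<in> V \<and> k u = m u}"

lemma relgens_pos_subset: "relgens_pos V E m \<subseteq> relgens V E m"
  unfolding relgens_pos_def relgens_def by blast

text \<open>Relation (II) at \<open>\<langle>k,u\<rangle> = -u\<^sup>2\<close> is, up to the sign \<open>(-1)\<^bsup>u\<^sup>2\<^esup>\<close>, relation (II) at
  \<open>\<langle>k + 2u\<^sup>*,u\<rangle> = u\<^sup>2\<close> read backwards.\<close>

lemma rel_space_eq_cspan_pos: "rel_space V E m = cspan (relgens_pos V E m)"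
proof
  show "cspan (relgens_pos V E m) \<subseteq> rel_space V E m"
    unfolding rel_space_def by (rule cspan_mono[OF relgens_pos_subset])
  have "relgens V E m \<subseteq> cspan (relgens_pos V E m)"
  proof
    fix r assume "r \<in> relgens V E m"
    then consider "r \<in> relgens_pos V E m"
      | k u where "k \<in> Char V E m" "u \<in> V" "k u = - m u"
          "r = (\<lambda>j. delta k j - (-1::complex) ^ nat \<bar>m u\<bar> * delta (\<lambda>w. k w + 2 * dual V E m u w) j)"
      unfolding relgens_def relgens_pos_def by blast
    then show "r \<in> cspan (relgens_pos V E m)"
    proof cases
      case 2
      define s where "s = (-1::complex) ^ nat \<bar>m u\<bar>"
      define k' where "k' = (\<lambda>w. k w + 2 * dual V E m u w)"
      have "k' \<in> Char V E m" "k' u = m u" "(\<lambda>w. k' w - 2 * dual V E m u w) = k"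
        using 2 by (simp_all add: k'_def Char_add_dual dual_self)
      then have g: "(\<lambda>j. delta k' j - s * delta k j) \<in> relgens_pos V E m"
        unfolding relgens_pos_def s_def using 2(2) by force
      have "s * s = 1" by (simp add: s_def flip: power_add)
      then have "r = (\<lambda>j. - s * (delta k' j - s * delta k j))"
        using 2(4) by (simp add: s_def k'_def fun_eq_iff algebra_simps)
      then show ?thesis using cspan_scale[OF cspan_superset[OF g], of "- s"] by simp
    qed (rule cspan_superset)
  qed
  then show "rel_space V E m \<subseteq> cspan (relgens_pos V E m)"
    unfolding rel_space_def by (rule cspan_subset_cspan)
qed

lemma finite_supp_relgens: "r \<in> relgens V E m \<Longrightarrow> finite (supp r)"
  unfolding relgens_def using finite_supp_diff2 by auto

section \<open>The maps A, B and C on generators\<close>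

definition ladder :: "'a \<Rightarrow> int \<Rightarrow> ('a \<Rightarrow> int) \<Rightarrow> nat \<Rightarrow> ('a \<Rightarrow> int) \<Rightarrow> complex" where
  "ladder v p k n = (\<lambda>x. \<Sum>t<n. delta (k(v := 2 * int t - p)) x)"

text \<open>\<open>Cgen v p k\<close> is \<open>-2\<close> times the sum of \<open>1 \<otimes> k(v := i)\<close> over \<open>i \<equiv> p mod 2\<close>,
  \<open>-p \<le> i < \<langle>k,v\<rangle>\<close>; here \<open>\<langle>k,v\<rangle> \<equiv> p + 1 mod 2\<close>.\<close>

definition Cgen :: "'a \<Rightarrow> int \<Rightarrow> ('a \<Rightarrow> int) \<Rightarrow> ('a \<Rightarrow> int) \<Rightarrow> complex" where
  "Cgen v p k = (\<lambda>x. -2 * ladder v p k (nat ((k v + p + 1) div 2)) x)"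

lemma Agen_eq_ladder:
  assumes "p \<ge> 0"
  shows "Agen v p k = ladder v p k (Suc (nat p))"
proof
  fix x
  show "Agen v p k x = ladder v p k (Suc (nat p)) x"
    unfolding Agen_def ladder_def
    by (rule sum.reindex_bij_witness[where i="\<lambda>t. 2 * int t - p" and j="\<lambda>i. nat ((i + p) div 2)"])
      (use assms in \<open>auto elim!: evenE\<close>)
qed

lemma ladder_Suc: "ladder v p k (Suc n) = (\<lambda>x. ladder v p k n x + delta (k(v := 2 * int n - p)) x)"
  by (simp add: ladder_def)

lemma supp_ladder: "supp (ladder v p k n) \<subseteq> (\<lambda>t. k(v := 2 * int t - p)) ` {..<n}"
  unfolding ladder_def using supp_sum_subset by fastforce

lemma finite_supp_ladder: "finite (supp (ladder v p k n))"
  using supp_ladder by (rule finite_subset) simp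

lemma supp_Cgen: "supp (Cgen v p k) \<subseteq> supp (ladder v p k (nat ((k v + p + 1) div 2)))"
  by (auto simp: supp_def Cgen_def)

lemma finite_supp_Cgen: "finite (supp (Cgen v p k))"
  using supp_Cgen finite_supp_ladder by (rule finite_subset)

lemma even_nonneg_eq_double: "even (a::int) \<Longrightarrow> 0 \<le> a \<Longrightarrow> \<exists>n. 2 * int n = a"
  by (auto elim!: evenE intro!: exI[of _ "nat (a div 2)"])

lemma ladder_upd [simp]: "ladder v p (k(v := i)) = ladder v p k"
  by (rule ext) (simp add: ladder_def)

lemma Cgen_eq_ladder:
  assumes "2 * int n = k v + p + 1"
  shows "Cgen v p k = (\<lambda>x. -2 * ladder v p k n x)"
proof -
  have "nat ((k v + p + 1) div 2) = n"
    unfolding assms[symmetric] by simp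
  then show ?thesis by (simp add: Cgen_def)
qed

lemma Cgen_eq_zero: "k v + p + 1 \<le> 0 \<Longrightarrow> Cgen v p k = (\<lambda>x. 0)"
  unfolding Cgen_def ladder_def by simp

lemma finite_supp_Bgen: "finite (supp (Bgen v k))"
  unfolding Bgen_def by (rule finite_supp_lincomb2)

lemma Bgen_in_cspan:
  "delta (k(v := k v + 1)) \<in> cspan T \<Longrightarrow> delta (k(v := k v - 1)) \<in> cspan T \<Longrightarrow> Bgen v k \<in> cspan T"
  unfolding Bgen_def by (intro cspan_add cspan_scale)

lemma linext_Bgen_ladder:
  "linext (Bgen v) (ladder v p k n)
   = (\<lambda>z. (-1/2) * (delta (k(v := 2 * int n - p - 1)) z - delta (k(v := - p - 1)) z))"
proof
  fix z
  have "linext (Bgen v) (ladder v p k n) z = (\<Sum>t<n. Bgen v (k(v := 2 * int t - p)) z)"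
    unfolding ladder_def using linext_sum[of "{..<n}" "\<lambda>t. delta (k(v := 2 * int t - p))" "Bgen v" "\<lambda>_. 1"]
    by simp
  also have "\<dots> = (\<Sum>t<n. (-1/2) * (delta (k(v := 2 * int (Suc t) - p - 1)) z - delta (k(v := 2 * int t - p - 1)) z))"
    by (intro sum.cong) (simp_all add: Bgen_def field_simps)
  also have "\<dots> = (-1/2) * (\<Sum>t<n. delta (k(v := 2 * int (Suc t) - p - 1)) z - delta (k(v := 2 * int t - p - 1)) z)"
    by (simp only: sum_distrib_left)
  also have "\<dots> = (-1/2) * (delta (k(v := 2 * int n - p - 1)) z - delta (k(v := - p - 1)) z)"
    by (subst sum_lessThan_telescope[where f="\<lambda>t. delta (k(v := 2 * int t - p - 1)) z"]) simp
  finally show "linext (Bgen v) (ladder v p k n) z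
      = (-1/2) * (delta (k(v := 2 * int n - p - 1)) z - delta (k(v := - p - 1)) z)" .
qed

section \<open>Exactness\<close>

locale reframing =
  fixes V :: "'a set" and E :: "'a \<Rightarrow> 'a \<Rightarrow> bool" and m :: "'a \<Rightarrow> int" and v :: 'a and p :: int
  assumes finite_V: "finite V" and sym_E: "\<And>u w. E u w \<Longrightarrow> E w u"
    and v_in_V: "v \<in> V" and m_v: "m v = - p" and p_pos: "p > 0"
begin

abbreviation "m1 \<equiv> m(v := - p + 1)"

abbreviation "W \<equiv> cspan (relgens V E m \<union> Agen v p ` Char (V - {v}) E m)"

lemma Char_V_iff: "k \<in> Char V E mm \<longleftrightarrow> (\<forall>u. u \<notin> V \<longrightarrow> k u = 0) \<and> (\<forall>u\<in>V. even (k u - mm u))"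
  using Char_iff[OF finite_V sym_E] .

lemma Char_minus_v_iff:
  "k \<in> Char (V - {v}) E mm \<longleftrightarrow> (\<forall>u. u \<notin> V - {v} \<longrightarrow> k u = 0) \<and> (\<forall>u\<in>V - {v}. even (k u - mm u))"
  using Char_iff[of "V - {v}" E] finite_V sym_E by simp

lemma Char_upd_v:
  "k \<in> Char V E mm \<Longrightarrow> even (a - mm' v) \<Longrightarrow> (\<And>w. w \<in> V \<Longrightarrow> w \<noteq> v \<Longrightarrow> even (k w - mm' w))
   \<Longrightarrow> k(v := a) \<in> Char V E mm'"
  using v_in_V by (auto simp: Char_V_iff)

lemma Char_m1_of_m:
  assumes "k \<in> Char V E m"
  shows "k(v := k v + 1) \<in> Char V E m1" "k(v := k v - 1) \<in> Char V E m1"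
proof -
  have "even (k v + p)" using assms v_in_V m_v by (simp add: Char_V_iff)
  then show "k(v := k v + 1) \<in> Char V E m1" "k(v := k v - 1) \<in> Char V E m1"
    using assms v_in_V m_v by (auto intro!: Char_upd_v simp: Char_V_iff)
qed

lemma Char_m_of_m1: "j \<in> Char V E m1 \<Longrightarrow> even (a + p) \<Longrightarrow> j(v := a) \<in> Char V E m"
  by (rule Char_upd_v) (auto simp: Char_V_iff m_v)

lemma dual_v_at_other: "u \<noteq> v \<Longrightarrow> u \<in> V \<Longrightarrow> dual V E mm v u = (if E u v then -1 else 0)"
  using sym_E by (auto simp: dual_def Qf_def)

lemma sign_m_v: "(-1::complex) ^ nat \<bar>m v\<bar> = - ((-1) ^ nat \<bar>m1 v\<bar>)"
proof -
  have "nat \<bar>m v\<bar> = Suc (nat \<bar>m1 v\<bar>)" using p_pos m_v by simp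
  then show ?thesis by simp
qed

lemma rel_space_subset_W: "rel_space V E m \<subseteq> W"
  unfolding rel_space_def by (rule cspan_mono) blast

lemma Agen_in_W: "k \<in> Char (V - {v}) E m \<Longrightarrow> Agen v p k \<in> W"
  by (rule cspan_superset) blast

lemma ladder_in_W:
  assumes "j \<in> Char V E m1"
  shows "ladder v p j (Suc (nat p)) \<in> W"
proof -
  have "j(v := 0) \<in> Char (V - {v}) E m"
    using assms by (auto simp: Char_V_iff Char_minus_v_iff)
  then have "Agen v p (j(v := 0)) \<in> W"
    by (rule Agen_in_W)
  then show ?thesis
    using Agen_eq_ladder[of p v "j(v := 0)"] p_pos by simp
qed

lemma Bgen_relI:
  assumes k: "k \<in> Char V E m" and u: "u \<in> V" and big: "- m u < \<bar>k u\<bar>"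
  shows "Bgen v k \<in> rel_space V E m1"
  unfolding rel_space_def
proof (rule Bgen_in_cspan)
  have "even (k v + p)" using k v_in_V m_v by (simp add: Char_V_iff)
  then have "- m1 u < \<bar>(k(v := k v + 1)) u\<bar> \<and> - m1 u < \<bar>(k(v := k v - 1)) u\<bar>"
    using big m_v by (cases "u = v") (auto elim!: evenE)
  then show "delta (k(v := k v + 1)) \<in> cspan (relgens V E m1)"
    "delta (k(v := k v - 1)) \<in> cspan (relgens V E m1)"
    using delta_in_rel_space[OF Char_m1_of_m(1)[OF k] u] delta_in_rel_space[OF Char_m1_of_m(2)[OF k] u]
    by (auto simp: rel_space_def)
qed

lemma Bgen_relII_off_v:
  assumes k: "k \<in> Char V E m" and u: "u \<in> V" "u \<noteq> v" and ku: "k u = m u"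
  defines "s \<equiv> (-1::complex) ^ nat \<bar>m u\<bar>" and "y \<equiv> (\<lambda>w. k w - 2 * dual V E m u w)"
  shows "(\<lambda>z. Bgen v k z - s * Bgen v y z) \<in> rel_space V E m1"
proof -
  define k1 where "k1 = k(v := k v + 1)"
  define k2 where "k2 = k(v := k v - 1)"
  have y1: "y(v := y v + 1) = (\<lambda>w. k1 w - 2 * dual V E m1 u w)"
    and y2: "y(v := y v - 1) = (\<lambda>w. k2 w - 2 * dual V E m1 u w)"
    by (simp_all add: fun_eq_iff y_def k1_def k2_def dual_upd_other[OF u(2)])
  have s: "s = (-1) ^ nat \<bar>m1 u\<bar>" using u(2) by (simp add: s_def)
  have r1: "(\<lambda>z. delta k1 z - s * delta (\<lambda>w. k1 w - 2 * dual V E m1 u w) z) \<in> rel_space V E m1"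
    unfolding s k1_def by (rule relII_in_rel_space[OF Char_m1_of_m(1)[OF k] u(1)]) (use ku u(2) in simp)
  have r2: "(\<lambda>z. delta k2 z - s * delta (\<lambda>w. k2 w - 2 * dual V E m1 u w) z) \<in> rel_space V E m1"
    unfolding s k2_def by (rule relII_in_rel_space[OF Char_m1_of_m(2)[OF k] u(1)]) (use ku u(2) in simp)
  have "(\<lambda>z. Bgen v k z - s * Bgen v y z) =
     (\<lambda>z. (-1/2) * (delta k1 z - s * delta (\<lambda>w. k1 w - 2 * dual V E m1 u w) z)
        + (1/2) * (delta k2 z - s * delta (\<lambda>w. k2 w - 2 * dual V E m1 u w) z))"
    unfolding Bgen_def y1 y2 k1_def[symmetric] k2_def[symmetric] by (simp add: field_simps)
  also have "\<dots> \<in> rel_space V E m1"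
    using r1 r2 unfolding rel_space_def by (intro cspan_add cspan_scale)
  finally show ?thesis .
qed

lemma Bgen_relII_at_v:
  assumes k: "k \<in> Char V E m" and kv: "k v = m v"
  defines "s \<equiv> (-1::complex) ^ nat \<bar>m v\<bar>" and "y \<equiv> (\<lambda>w. k w - 2 * dual V E m v w)"
  shows "(\<lambda>z. Bgen v k z - s * Bgen v y z) \<in> rel_space V E m1"
proof -
  have kv: "k v = - p" and yv: "y v = p"
    using kv m_v v_in_V by (simp_all add: y_def dual_self)
  define kp where "kp = k(v := - p + 1)"
  define s' where "s' = (-1::complex) ^ nat \<bar>m1 v\<bar>"
  have "kp \<in> Char V E m1"
    using Char_m1_of_m(1)[OF k] kv by (simp add: kp_def)
  then have rel: "(\<lambda>z. delta kp z - s' * delta (\<lambda>w. kp w - 2 * dual V E m1 v w) z) \<in> rel_space V E m1"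
    unfolding s'_def by (rule relII_in_rel_space[OF _ v_in_V]) (simp add: kp_def)
  have "k(v := - p - 1) \<in> Char V E m1"
    using Char_m1_of_m(2)[OF k] kv by simp
  then have kill_k: "delta (k(v := - p - 1)) \<in> rel_space V E m1"
    by (rule delta_in_rel_space[OF _ v_in_V]) (use p_pos in simp)
  have "y(v := p + 1) \<in> Char V E m1"
    using Char_diff_dual[OF k] v_in_V m_v by (auto intro!: Char_upd_v simp: Char_V_iff y_def)
  then have kill_y: "delta (y(v := p + 1)) \<in> rel_space V E m1"
    by (rule delta_in_rel_space[OF _ v_in_V]) (use p_pos in simp)
  have ss: "s = - s'" unfolding s_def s'_def by (rule sign_m_v)
  have yy: "(\<lambda>w. kp w - 2 * dual V E m1 v w) = y(v := p - 1)"
    using v_in_V by (simp add: fun_eq_iff kp_def y_def dual_self dual_upd_at)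
  have "(\<lambda>z. Bgen v k z - s * Bgen v y z) =
     (\<lambda>z. (-1/2) * (delta kp z - s' * delta (\<lambda>w. kp w - 2 * dual V E m1 v w) z)
        + (1/2) * delta (k(v := - p - 1)) z + (s/2) * delta (y(v := p + 1)) z)"
    by (rule ext) (simp only: Bgen_def yy kv yv, simp add: kp_def ss field_simps)
  also have "\<dots> \<in> rel_space V E m1"
    using rel kill_k kill_y unfolding rel_space_def by (intro cspan_add cspan_scale)
  finally show ?thesis .
qed

lemma linext_Bgen_relII:
  assumes k: "k \<in> Char V E m" and u: "u \<in> V" and ku: "k u = m u"
  shows "linext (Bgen v) (\<lambda>j. delta k j - (-1::complex) ^ nat \<bar>m u\<bar> * delta (\<lambda>w. k w - 2 * dual V E m u w) j)
    \<in> rel_space V E m1"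
  unfolding linext_diff2
  using Bgen_relII_at_v[OF k] Bgen_relII_off_v[OF k u _ ku] ku by (cases "u = v") auto

lemma linext_Bgen_rel_space:
  assumes "f \<in> rel_space V E m"
  shows "linext (Bgen v) f \<in> rel_space V E m1"
  unfolding rel_space_def[of V E m1]
proof (rule linext_cspan)
  show "f \<in> cspan (relgens_pos V E m)"
    using assms by (simp add: rel_space_eq_cspan_pos)
  fix r assume r: "r \<in> relgens_pos V E m"
  then show "finite (supp r)"
    using relgens_pos_subset finite_supp_relgens by blast
  show "linext (Bgen v) r \<in> cspan (relgens V E m1)"
    using r Bgen_relI linext_Bgen_relII unfolding relgens_pos_def rel_space_def by auto
qed

lemma linext_Bgen_Agen:
  assumes k: "k \<in> Char (V - {v}) E m"
  shows "linext (Bgen v) (Agen v p k) \<in> rel_space V E m1"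
proof -
  have "k(v := p + 1) \<in> Char V E m1" "k(v := - p - 1) \<in> Char V E m1"
    using k v_in_V by (auto simp: Char_V_iff Char_minus_v_iff)
  then have "delta (k(v := p + 1)) \<in> rel_space V E m1" "delta (k(v := - p - 1)) \<in> rel_space V E m1"
    using p_pos v_in_V by (auto intro: delta_in_rel_space[where u = v])
  then have "(\<lambda>z. (-1/2) * (delta (k(v := p + 1)) z - delta (k(v := - p - 1)) z)) \<in> rel_space V E m1"
    unfolding rel_space_def by (intro cspan_scale cspan_diff)
  moreover have "linext (Bgen v) (Agen v p k)
      = (\<lambda>z. (-1/2) * (delta (k(v := p + 1)) z - delta (k(v := - p - 1)) z))"
    using p_pos by (simp add: Agen_eq_ladder linext_Bgen_ladder add.commute)
  ultimately show ?thesis by simp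
qed

lemma linext_Bgen_W:
  assumes "f \<in> W"
  shows "linext (Bgen v) f \<in> rel_space V E m1"
  unfolding rel_space_def[of V E m1]
proof (rule linext_cspan[OF _ _ assms])
  fix g assume "g \<in> relgens V E m \<union> Agen v p ` Char (V - {v}) E m"
  then consider "g \<in> relgens V E m" | k where "k \<in> Char (V - {v}) E m" "g = Agen v p k"
    by blast
  then have "finite (supp g) \<and> linext (Bgen v) g \<in> cspan (relgens V E m1)"
  proof cases
    case 1
    then show ?thesis
      using finite_supp_relgens linext_Bgen_rel_space cspan_superset
      unfolding rel_space_def by blast
  next
    case 2
    then show ?thesis
      using finite_supp_ladder linext_Bgen_Agen p_pos unfolding rel_space_def
      by (simp add: Agen_eq_ladder)
  qed
  then show "finite (supp g)" "linext (Bgen v) g \<in> cspan (relgens V E m1)"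
    by blast+
qed

lemma delta_in_W: "k \<in> Char V E m \<Longrightarrow> u \<in> V \<Longrightarrow> - m u < \<bar>k u\<bar> \<Longrightarrow> delta k \<in> W"
  by (rule subsetD[OF rel_space_subset_W], rule delta_in_rel_space)

lemma relII_in_W:
  "k \<in> Char V E m \<Longrightarrow> u \<in> V \<Longrightarrow> k u = m u \<Longrightarrow>
   (\<lambda>j. delta k j - (-1::complex) ^ nat \<bar>m u\<bar> * delta (\<lambda>w. k w - 2 * dual V E m u w) j) \<in> W"
  by (rule subsetD[OF rel_space_subset_W], rule relII_in_rel_space)

text \<open>Relation (II) at v moves \<open>z\<close> to \<open>z - 2v\<^sup>*\<close>, which relation (I) kills at the neighbour u.\<close>

lemma delta_in_W_neighbour:
  assumes z: "z \<in> Char V E m" and zv: "z v = - p" and u: "u \<in> V" "u \<noteq> v" "E u v"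
    and zu: "z u = - m u"
  shows "delta z \<in> W"
proof -
  define s where "s = (-1::complex) ^ nat \<bar>m v\<bar>"
  define z' where "z' = (\<lambda>w. z w - 2 * dual V E m v w)"
  have "(\<lambda>j. delta z j - s * delta z' j) \<in> W"
    unfolding s_def z'_def by (rule relII_in_W[OF z v_in_V]) (simp add: zv m_v)
  moreover have "delta z' \<in> W"
    unfolding z'_def
    by (rule delta_in_W[OF Char_diff_dual[OF z] u(1)]) (simp add: dual_v_at_other[OF u(2,1)] u(3) zu)
  ultimately have "(\<lambda>j. (delta z j - s * delta z' j) + s * delta z' j) \<in> W"
    by (intro cspan_add cspan_scale)
  then show ?thesis by simp
qed

lemma even_Char_m1_v: "j \<in> Char V E m1 \<Longrightarrow> even (j v + p + 1)"
  using v_in_V by (auto simp: Char_V_iff)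

lemma Cgen_relI:
  assumes j: "j \<in> Char V E m1" and u: "u \<in> V" and big: "- m1 u < \<bar>j u\<bar>"
  shows "Cgen v p j \<in> W"
proof (cases "u = v")
  case False
  have "delta (j(v := 2 * int t - p)) \<in> W" for t
    by (rule delta_in_W[OF Char_m_of_m1[OF j] u]) (use big False in simp_all)
  then show ?thesis
    unfolding Cgen_def ladder_def by (intro cspan_scale cspan_sum)
next
  case True
  have ev: "even (j v + p + 1)" by (rule even_Char_m1_v[OF j])
  have big': "p - 1 < \<bar>j v\<bar>" using big True by simp
  show ?thesis
  proof (cases "j v < 0")
    case True
    then have "j v + p + 1 \<le> 0" using big' ev by presburger
    then show ?thesis by (simp add: Cgen_eq_zero cspan_zero)
  next
    case False
    then have jv: "p + 1 \<le> j v" using big' ev by presburger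
    obtain n where n: "2 * int n = j v + p + 1"
      using even_nonneg_eq_double[OF ev] jv p_pos by auto
    define P where "P = Suc (nat p)"
    have "P \<le> n" using n jv p_pos by (simp add: P_def)
    then have "(\<Sum>t<n. f t) = (\<Sum>t<P. f t) + (\<Sum>t\<in>{P..<n}. f t)" for f :: "nat \<Rightarrow> complex"
      using sum.union_disjoint[of "{..<P}" "{P..<n}" f] by (simp add: ivl_disj_int_one ivl_disj_un_one)
    then have split: "ladder v p j n = (\<lambda>x. ladder v p j P x + (\<Sum>t\<in>{P..<n}. delta (j(v := 2 * int t - p)) x))"
      unfolding ladder_def by simp
    have "delta (j(v := 2 * int t - p)) \<in> W" if "t \<in> {P..<n}" for t
      using that p_pos v_in_V by (intro delta_in_W[OF Char_m_of_m1[OF j]]) (auto simp: P_def m_v)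
    then have "(\<lambda>x. ladder v p j P x + (\<Sum>t\<in>{P..<n}. delta (j(v := 2 * int t - p)) x)) \<in> W"
      using ladder_in_W[OF j] by (intro cspan_add cspan_sum) (auto simp: P_def)
    then show ?thesis
      unfolding Cgen_eq_ladder[where k = j, OF n] split[symmetric] by (rule cspan_scale)
  qed
qed

lemma relII_ladder_in_W:
  assumes j: "j \<in> Char V E m1" and u: "u \<in> V" "u \<noteq> v" and ju: "j u = m u"
  shows "(\<lambda>z. \<Sum>t<n. delta (j(v := 2 * int t - p)) z
    - (-1::complex) ^ nat \<bar>m u\<bar> * delta (\<lambda>w. (j(v := 2 * int t - p)) w - 2 * dual V E m u w) z) \<in> W"
  using ju u Char_m_of_m1[OF j] by (intro cspan_sum relII_in_W) simp_all

lemma Cgen_relII_nonadjacent: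
  assumes j: "j \<in> Char V E m1" and u: "u \<in> V" "u \<noteq> v" "\<not> E u v" and ju: "j u = m u"
  defines "s \<equiv> (-1::complex) ^ nat \<bar>m u\<bar>" and "y \<equiv> (\<lambda>w. j w - 2 * dual V E m u w)"
  shows "(\<lambda>z. Cgen v p j z - s * Cgen v p y z) \<in> W"
proof -
  have "dual V E m u v = 0" using u v_in_V by (simp add: dual_at_other)
  then have yv: "y v = j v" and yt: "y(v := i) = (\<lambda>w. (j(v := i)) w - 2 * dual V E m u w)" for i
    by (auto simp: y_def)
  have "(\<lambda>z. Cgen v p j z - s * Cgen v p y z) = (\<lambda>z. -2 * (\<Sum>t<nat ((j v + p + 1) div 2).
      delta (j(v := 2 * int t - p)) z - s * delta (\<lambda>w. (j(v := 2 * int t - p)) w - 2 * dual V E m u w) z))"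
    by (simp add: Cgen_def ladder_def yv yt sum_subtractf sum_distrib_left algebra_simps)
  also have "\<dots> \<in> W"
    unfolding s_def by (intro cspan_scale relII_ladder_in_W[OF j u(1,2) ju])
  finally show ?thesis .
qed

text \<open>Here \<open>\<langle>y,v\<rangle> = \<langle>j,v\<rangle> + 2\<close>: the terms of \<open>C y\<close> pair off with those of \<open>C j\<close> by relation (II)
  at u, except the lowest one, which is killed through the neighbour u.\<close>

lemma Cgen_relII_adjacent:
  assumes j: "j \<in> Char V E m1" and u: "u \<in> V" "u \<noteq> v" "E u v" and ju: "j u = m u"
  defines "s \<equiv> (-1::complex) ^ nat \<bar>m u\<bar>" and "y \<equiv> (\<lambda>w. j w - 2 * dual V E m u w)"
  shows "(\<lambda>z. Cgen v p j z - s * Cgen v p y z) \<in> W"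
proof -
  have "dual V E m u v = -1" using u v_in_V by (simp add: dual_at_other)
  then have yv: "y v = j v + 2"
    and yt: "y(v := 2 * int (Suc t) - p) = (\<lambda>w. (j(v := 2 * int t - p)) w - 2 * dual V E m u w)" for t
    by (auto simp: y_def)
  show ?thesis
  proof (cases "0 \<le> j v + p + 1")
    case True
    then obtain n where n: "2 * int n = j v + p + 1"
      using even_nonneg_eq_double[OF even_Char_m1_v[OF j]] by blast
    then have n': "2 * int (Suc n) = y v + p + 1" by (simp add: yv)
    have y0: "delta (y(v := - p)) \<in> W"
    proof (rule delta_in_W_neighbour[OF _ _ u])
      show "y(v := - p) \<in> Char V E m"
        unfolding y_def by (rule Char_m_of_m1[OF Char_diff_dual[OF j]]) simp
      show "(y(v := - p)) u = - m u"
        using u ju by (simp add: y_def dual_self)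
    qed simp
    have "Cgen v p y = (\<lambda>z. -2 * (delta (y(v := - p)) z
        + (\<Sum>t<n. delta (\<lambda>w. (j(v := 2 * int t - p)) w - 2 * dual V E m u w) z)))"
      unfolding Cgen_eq_ladder[where k = y, OF n'] ladder_def sum.lessThan_Suc_shift yt by simp
    then have "(\<lambda>z. Cgen v p j z - s * Cgen v p y z) = (\<lambda>z. -2 * (\<Sum>t<n. delta (j(v := 2 * int t - p)) z
        - s * delta (\<lambda>w. (j(v := 2 * int t - p)) w - 2 * dual V E m u w) z) + (2 * s) * delta (y(v := - p)) z)"
      by (simp add: Cgen_eq_ladder[where k = j, OF n] ladder_def sum_subtractf sum_distrib_left algebra_simps)
    also have "\<dots> \<in> W"
      unfolding s_def by (intro cspan_add cspan_scale relII_ladder_in_W[OF j u(1,2) ju] y0)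
    finally show ?thesis .
  next
    case False
    then have "j v + p + 1 \<le> 0" "y v + p + 1 \<le> 0"
      using even_Char_m1_v[OF j] yv by presburger+
    then show ?thesis by (simp add: Cgen_eq_zero cspan_zero)
  qed
qed

lemma Cgen_relII_at_v:
  assumes j: "j \<in> Char V E m1" and jv: "j v = m1 v"
  defines "s \<equiv> (-1::complex) ^ nat \<bar>m1 v\<bar>" and "y \<equiv> (\<lambda>w. j w - 2 * dual V E m1 v w)"
  shows "(\<lambda>z. Cgen v p j z - s * Cgen v p y z) \<in> W"
proof -
  have yv: "y v = p - 1" using jv v_in_V by (simp add: y_def dual_self)
  have Cj: "Cgen v p j = (\<lambda>x. -2 * ladder v p j 1 x)"
    by (rule Cgen_eq_ladder) (simp add: jv)
  have Cy: "Cgen v p y = (\<lambda>x. -2 * ladder v p y (nat p) x)"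
    by (rule Cgen_eq_ladder) (use yv p_pos in simp)
  define s' where "s' = (-1::complex) ^ nat \<bar>m v\<bar>"
  have s': "s' = - s" unfolding s'_def s_def by (rule sign_m_v)
  define j0 where "j0 = j(v := - p)"
  have "j0 \<in> Char V E m" unfolding j0_def by (rule Char_m_of_m1[OF j]) simp
  then have rel: "(\<lambda>x. delta j0 x - s' * delta (\<lambda>w. j0 w - 2 * dual V E m v w) x) \<in> W"
    unfolding s'_def by (rule relII_in_W[OF _ v_in_V]) (simp add: j0_def m_v)
  have A: "ladder v p y (Suc (nat p)) \<in> W"
    unfolding y_def by (rule ladder_in_W[OF Char_diff_dual[OF j]])
  have "(\<lambda>w. j0 w - 2 * dual V E m v w) = y(v := p)"
    using v_in_V by (simp add: fun_eq_iff j0_def y_def dual_self dual_upd_at m_v)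
  then have "(\<lambda>z. Cgen v p j z - s * Cgen v p y z) =
     (\<lambda>z. -2 * (delta j0 z - s' * delta (\<lambda>w. j0 w - 2 * dual V E m v w) z) + (2 * s) * ladder v p y (Suc (nat p)) z)"
    using p_pos by (simp add: Cj Cy ladder_def j0_def s' algebra_simps)
  also have "\<dots> \<in> W"
    by (intro cspan_add cspan_scale rel A)
  finally show ?thesis .
qed

lemma linext_Cgen_relII:
  assumes j: "j \<in> Char V E m1" and u: "u \<in> V" and ju: "j u = m1 u"
  shows "linext (Cgen v p) (\<lambda>x. delta j x - (-1::complex) ^ nat \<bar>m1 u\<bar> * delta (\<lambda>w. j w - 2 * dual V E m1 u w) x) \<in> W"
proof -
  consider "u = v" | "u \<noteq> v" "\<not> E u v" | "u \<noteq> v" "E u v" by blast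
  then show ?thesis
  proof cases
    case 1
    then show ?thesis using Cgen_relII_at_v[OF j] ju by (simp add: linext_diff2)
  next
    case 2
    then show ?thesis using Cgen_relII_nonadjacent[OF j u] ju by (simp add: linext_diff2 dual_upd_other)
  next
    case 3
    then show ?thesis using Cgen_relII_adjacent[OF j u] ju by (simp add: linext_diff2 dual_upd_other)
  qed
qed

lemma linext_Cgen_rel_space:
  assumes "f \<in> rel_space V E m1"
  shows "linext (Cgen v p) f \<in> W"
proof (rule linext_cspan)
  show "f \<in> cspan (relgens_pos V E m1)"
    using assms by (simp add: rel_space_eq_cspan_pos)
  fix r assume r: "r \<in> relgens_pos V E m1"
  then show "finite (supp r)"
    using relgens_pos_subset finite_supp_relgens by blast
  show "linext (Cgen v p) r \<in> W"
    using r Cgen_relI linext_Cgen_relII unfolding relgens_pos_def by auto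
qed

lemma delta_minus_Cgen_Bgen:
  assumes k: "k \<in> Char V E m"
  shows "(\<lambda>x. delta k x - linext (Cgen v p) (Bgen v k) x) \<in> W"
proof -
  have CB: "linext (Cgen v p) (Bgen v k)
      = (\<lambda>z. (-1/2) * Cgen v p (k(v := k v + 1)) z + (1/2) * Cgen v p (k(v := k v - 1)) z)"
    unfolding Bgen_def by (rule linext_lincomb2)
  have "even (k v + p)" using k v_in_V m_v by (simp add: Char_V_iff)
  show ?thesis
  proof (cases "0 \<le> k v + p")
    case True
    then obtain n where n: "2 * int n = k v + p"
      using even_nonneg_eq_double[OF \<open>even (k v + p)\<close>] by blast
    have "k(v := 2 * int n - p) = k" using n by auto
    then have "Cgen v p (k(v := k v + 1)) = (\<lambda>x. -2 * (ladder v p k n x + delta k x))"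
      "Cgen v p (k(v := k v - 1)) = (\<lambda>x. -2 * ladder v p k n x)"
      using Cgen_eq_ladder[of "Suc n" "k(v := k v + 1)" v p] Cgen_eq_ladder[of n "k(v := k v - 1)" v p] n
      by (simp_all add: ladder_Suc)
    then have "(\<lambda>x. delta k x - linext (Cgen v p) (Bgen v k) x) = (\<lambda>x. 0)"
      by (simp add: CB field_simps)
    then show ?thesis by (simp add: cspan_zero)
  next
    case False
    then have "k v + p + 2 \<le> 0"
      using \<open>even (k v + p)\<close> by presburger
    then have "(\<lambda>x. delta k x - linext (Cgen v p) (Bgen v k) x) = delta k"
      by (simp add: CB Cgen_eq_zero)
    moreover have "delta k \<in> W"
      using False by (intro delta_in_W[OF k v_in_V]) (simp add: m_v)
    ultimately show ?thesis by simp
  qed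
qed

lemma delta_minus_Bgen_Cgen:
  assumes j: "j \<in> Char V E m1"
  shows "(\<lambda>x. delta j x - linext (Bgen v) (Cgen v p j) x) \<in> rel_space V E m1"
proof (cases "0 \<le> j v + p + 1")
  case True
  then obtain n where n: "2 * int n = j v + p + 1"
    using even_nonneg_eq_double[OF even_Char_m1_v[OF j]] by blast
  have "j(v := - p - 1) \<in> Char V E m1"
    using j v_in_V by (auto intro!: Char_upd_v simp: Char_V_iff)
  then have "delta (j(v := - p - 1)) \<in> rel_space V E m1"
    by (rule delta_in_rel_space[OF _ v_in_V]) (use p_pos in simp)
  moreover have "j(v := 2 * int n - p - 1) = j"
    using n by auto
  then have "linext (Bgen v) (Cgen v p j) z = delta j z - delta (j(v := - p - 1)) z" for z
    unfolding Cgen_eq_ladder[of n j v p, OF n] linext_scale[OF finite_supp_ladder] linext_Bgen_ladder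
    by simp
  ultimately show ?thesis by simp
next
  case False
  then have "- m1 v < \<bar>j v\<bar>"
    by simp
  then have "delta j \<in> rel_space V E m1"
    by (rule delta_in_rel_space[OF j v_in_V])
  then show ?thesis
    using False by (simp add: Cgen_eq_zero)
qed

lemma W_iff:
  "f \<in> W \<longleftrightarrow> (\<exists>g\<in>free_space (V - {v}) E m. \<exists>r\<in>rel_space V E m. f = (\<lambda>j. linext (Agen v p) g j + r j))"
  by (simp only: cspan_Un_image_iff rel_space_def Bex_def free_space_iff conj_assoc)

lemma linext_Bgen_in_rel_space_iff:
  assumes f: "f \<in> free_space V E m"
  shows "linext (Bgen v) f \<in> rel_space V E m1 \<longleftrightarrow> f \<in> W"
proof
  assume Bf: "linext (Bgen v) f \<in> rel_space V E m1"
  show "f \<in> W"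
  proof (rule linext_homotopy_kernel)
    show "finite (supp f)" "supp f \<subseteq> Char V E m"
      using f by (simp_all add: free_space_iff)
    show "linext (Bgen v) f \<in> cspan (relgens V E m1)"
      using Bf by (simp add: rel_space_def)
    show "finite (supp (Bgen v k))" for k
      by (rule finite_supp_Bgen)
    show "finite (supp r)" if "r \<in> relgens V E m1" for r
      using that by (rule finite_supp_relgens)
    show "linext (Cgen v p) r \<in> W" if "r \<in> relgens V E m1" for r
      using that by (intro linext_Cgen_rel_space) (simp add: rel_space_def cspan_superset)
    show "(\<lambda>x. delta k x - linext (Cgen v p) (Bgen v k) x) \<in> W" if "k \<in> Char V E m" for k
      using that by (rule delta_minus_Cgen_Bgen)
  qed
qed (rule linext_Bgen_W)

lemma Bgen_surjective:
  assumes h: "h \<in> free_space V E m1"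
  shows "\<exists>f\<in>free_space V E m. \<exists>r\<in>rel_space V E m1. h = (\<lambda>j. linext (Bgen v) f j + r j)"
proof -
  have h': "finite (supp h)" "supp h \<subseteq> Char V E m1"
    using h by (simp_all add: free_space_iff)
  have "linext (Cgen v p) h \<in> free_space V E m"
    unfolding free_space_iff
  proof (rule supp_linext[OF h'(1)])
    fix j assume "j \<in> supp h"
    then have "j \<in> Char V E m1" using h'(2) by blast
    then have "supp (Cgen v p j) \<subseteq> Char V E m"
      using supp_Cgen supp_ladder Char_m_of_m1 by fastforce
    then show "finite (supp (Cgen v p j)) \<and> supp (Cgen v p j) \<subseteq> Char V E m"
      by (simp add: finite_supp_Cgen)
  qed
  moreover have "(\<lambda>x. h x - linext (Bgen v) (linext (Cgen v p) h) x) \<in> rel_space V E m1"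
    unfolding rel_space_def using h' finite_supp_Cgen
    by (rule linext_homotopy_surjective) (use delta_minus_Bgen_Cgen in \<open>simp add: rel_space_def\<close>)
  ultimately show ?thesis
    by force
qed

end

theorem lemma5p2:
  fixes V :: "'a set" and E :: "'a \<Rightarrow> 'a \<Rightarrow> bool" and m :: "'a \<Rightarrow> int"
    and v :: 'a and p :: int
  assumes "plumbing_forest V E m"
    and "neg_definite V E m"
    and "v \<in> V" and "m v = - p" and "p > 0"
    and "neg_definite V E (m(v := - p + 1))"
  shows
    \<comment> \<open>exactness at H(Gamma): ker B = im A\<close>
    "(\<forall>f\<in>free_space V E m.
        linext (Bgen v) f \<in> rel_space V E (m(v := - p + 1)) \<longleftrightarrow>
        (\<exists>g\<in>free_space (V - {v}) E m. \<exists>r\<in>rel_space V E m.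
            f = (\<lambda>j. linext (Agen v p) g j + r j)))
     \<and>
    \<comment> \<open>exactness at H(Gamma_{+1}): B is surjective\<close>
     (\<forall>h\<in>free_space V E (m(v := - p + 1)).
        \<exists>f\<in>free_space V E m. \<exists>r\<in>rel_space V E (m(v := - p + 1)).
            h = (\<lambda>j. linext (Bgen v) f j + r j))"
proof -
  interpret reframing V E m v p
    using assms(1,3-5) by unfold_locales (auto simp: plumbing_forest_def)
  show ?thesis
    using linext_Bgen_in_rel_space_iff W_iff Bgen_surjective by blast
qed

end
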